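(* For every positive integer $n$ and every complex number $q$ with $0<|q|<1$, \[ \sum_{k=1}^{n}[4k+1]\frac{(q;q^2)_k^3}{(q^2;q^2)_k^3}\frac{(q^{-2n};q^2)_k}{(q^{3+2n};q^2)_k}\,q^{(1+2n)k}\sum_{i=1}^{2k}(-1)^i\frac{q^i}{[i]^2} =\frac{(q,q^3;q^2)_{n}}{(q^2;q^2)_{n}^2}\sum_{j=1}^n\frac{q^{2j}}{[2j]^2}. \]
   Context: For complex $x,q$ and an integer $n\ge 0$, $(x;q)_n=\prod_{i=0}^{n-1}(1-xq^i)$, and $(x_1,\dots,x_r;q)_n=(x_1;q)_n\cdots(x_r;q)_n$. The $q$-integer is $[n]=1+q+\cdots+q^{n-1}=(1-q^n)/(1-q)$. *)

theory Defs
  imports Complex_Main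
begin

definition qpoch :: "complex \<Rightarrow> complex \<Rightarrow> nat \<Rightarrow> complex" where
  "qpoch x q n = (\<Prod>i<n. 1 - x * q ^ i)"

definition qint :: "complex \<Rightarrow> nat \<Rightarrow> complex" where
  "qint q n = (\<Sum>i<n. q ^ i)"

end

theory Submission
  imports Defs
begin

text \<open>
Write T(n,k) for the k-th summand without its harmonic factor, H(k) for the alternating inner
sum, S(n) = (q,q^3;q^2)_n / (q^2;q^2)_n^2 and G(n) for the sum on the right. The sum over k
terminates at k = n, and both \<open>\<Sum>\<^sub>k T(n,k) = S(n)\<close> and \<open>\<Sum>\<^sub>k T(n,k) H(k) = S(n) G(n)\<close>
follow by induction on n. Rational certificates in a = q^(2n) and x = q^(2k) turn
T(n+1,k) - (S(n+1)/S(n)) T(n,k) into a difference D(k+1) - D(k), and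
(G(n+1) - G(n)) T(n+1,k) + D(k+1) (H(k+1) - H(k)) into a difference Z(k+1) - Z(k).
Abel summation of the first relation against H then reduces the weighted identity for n+1
to the one for n.
\<close>

lemma qint_eq_quotient: "q \<noteq> 1 \<Longrightarrow> qint q m = (1 - q^m) / (1 - q)"
  unfolding qint_def by (simp add: sum_gp_strict)

lemma qpoch_Suc: "qpoch x b (Suc k) = qpoch x b k * (1 - x * b^k)"
  unfolding qpoch_def by simp

lemma one_minus_mult_neq_0:
  fixes x y :: "'a::real_normed_div_algebra"
  assumes "norm x < 1" "norm y \<le> 1"
  shows "1 - x * y \<noteq> 0"
proof -
  have "norm (x * y) \<le> norm x"
    using assms(2) by (simp add: norm_mult mult_left_le)
  then have "norm (x * y) \<noteq> norm (1::'a)"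
    using assms(1) by simp
  then show ?thesis by auto
qed

lemma qpoch_neq_0:
  assumes "norm x < 1" "norm b \<le> 1"
  shows "qpoch x b k \<noteq> 0"
  using one_minus_mult_neq_0[OF assms(1)] assms(2)
  by (simp add: qpoch_def norm_power power_le_one)

lemma unit_disk_factors_neq_0:
  fixes q a x :: "'a::real_normed_field"
  assumes q: "norm q < 1" and a: "norm a \<le> 1" and x: "norm x \<le> 1"
  shows "1 - q \<noteq> 0" "1 - q*x \<noteq> 0" "1 - q^2*x \<noteq> 0" "1 - q*x^2 \<noteq> 0" "1 - q^5*x^2 \<noteq> 0"
    "1 - q^2*a \<noteq> 0" "1 - q^3*a \<noteq> 0" "1 - q^3*a*x \<noteq> 0" "1 - q^5*a*x \<noteq> 0"
proof -
  have *: "1 - q^m * y \<noteq> 0" if "0 < m" "norm y \<le> 1" for m y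
    using one_minus_mult_neq_0[OF _ that(2)] q that(1) by (simp add: norm_power power_less_one_iff)
  have ax: "norm (a*x) \<le> 1" and x2: "norm (x^2) \<le> 1"
    using a x by (simp_all add: norm_mult norm_power mult_le_one power_le_one)
  show "1 - q \<noteq> 0" using *[of 1 1] by simp
  show "1 - q*x \<noteq> 0" "1 - q*x^2 \<noteq> 0"
    using *[of 1] x x2 by auto
  show "1 - q^2*x \<noteq> 0" "1 - q^5*x^2 \<noteq> 0" "1 - q^2*a \<noteq> 0" "1 - q^3*a \<noteq> 0"
    using * a x x2 by auto
  show "1 - q^3*a*x \<noteq> 0" "1 - q^5*a*x \<noteq> 0"
    using *[OF _ ax] by (auto simp: mult.assoc)
qed

lemma creative_telescoping:
  fixes w t D Z h H :: "nat \<Rightarrow> 'a::comm_ring"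
  assumes D: "D 0 = 0" "D m = 0" and Z: "Z 0 = 0" "Z m = 0"
    and zeil: "\<And>k. w k - r * t k = D (Suc k) - D k"
    and harm: "\<And>k. g * w k + D (Suc k) * h k = Z (Suc k) - Z k"
    and H: "\<And>k. H (Suc k) = H k + h k"
  shows "(\<Sum>k<m. w k) = r * (\<Sum>k<m. t k)"
    and "(\<Sum>k<m. w k * H k) = r * (\<Sum>k<m. t k * H k) + g * (\<Sum>k<m. w k)"
proof -
  have "(\<Sum>k<m. w k - r * t k) = 0"
    unfolding zeil sum_lessThan_telescope D by simp
  then show "(\<Sum>k<m. w k) = r * (\<Sum>k<m. t k)"
    by (simp add: sum_subtractf sum_distrib_left)
  have "g * (\<Sum>k<m. w k) + (\<Sum>k<m. D (Suc k) * h k) = 0"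
    using sum_lessThan_telescope[of Z m] Z by (simp add: harm[symmetric] sum.distrib sum_distrib_left)
  then have harm_sum: "(\<Sum>k<m. D (Suc k) * h k) = - g * (\<Sum>k<m. w k)"
    by (simp add: add_eq_0_iff)
  have "D (Suc k) * H (Suc k) - D k * H k = (w k - r * t k) * H k + D (Suc k) * h k" for k
    unfolding zeil H by (simp add: algebra_simps)
  then have "(\<Sum>k<m. (w k - r * t k) * H k + D (Suc k) * h k) = 0"
    using sum_lessThan_telescope[of "\<lambda>k. D k * H k" m] D by simp
  moreover have "(\<Sum>k<m. (w k - r * t k) * H k + D (Suc k) * h k)
      = (\<Sum>k<m. w k * H k) - r * (\<Sum>k<m. t k * H k) + (\<Sum>k<m. D (Suc k) * h k)"
    by (simp add: sum.distrib sum_subtractf sum_distrib_left left_diff_distrib mult.assoc)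
  ultimately show "(\<Sum>k<m. w k * H k) = r * (\<Sum>k<m. t k * H k) + g * (\<Sum>k<m. w k)"
    unfolding harm_sum by (simp add: algebra_simps)
qed

definition summand :: "complex \<Rightarrow> nat \<Rightarrow> nat \<Rightarrow> complex" where
  "summand q n k = qint q (4*k+1)
     * (qpoch q (q^2) k)^3 / (qpoch (q^2) (q^2) k)^3
     * qpoch (inverse (q^(2*n))) (q^2) k / qpoch (q^(3+2*n)) (q^2) k
     * q^((1+2*n)*k)"

text \<open>In \<open>summand_ratio\<close>, \<open>zeil_cert\<close> and \<open>harm_cert\<close>, the arguments a and x stand for
  q^(2n) and q^(2k).\<close>

definition summand_ratio :: "complex \<Rightarrow> complex \<Rightarrow> complex \<Rightarrow> complex" where
  "summand_ratio q a x = (1 - q^5*x^2) / (1 - q*x^2) * (1 - q*x)^3 / (1 - q^2*x)^3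
     * q * (a - x) / (1 - q^3*a*x)"

lemma norm_qsq_power_le_1: "norm (q::'a::real_normed_div_algebra) < 1 \<Longrightarrow> norm ((q^2)^k) \<le> 1"
  by (simp add: norm_power power_le_one)

lemma summand_Suc:
  assumes q: "norm q < 1" "q \<noteq> 0"
  shows "summand q n (Suc k) = summand q n k * summand_ratio q ((q^2)^n) ((q^2)^k)"
proof -
  define a x where "a = (q^2)^n" and "x = (q^2)^k"
  have na: "norm a \<le> 1" and nx: "norm x \<le> 1"
    unfolding a_def x_def using norm_qsq_power_le_1[OF q(1)] by auto
  note nz = unit_disk_factors_neq_0(1,3,4,8)[OF q(1) na nx]
  have nq2: "norm (q^2) < 1"
    using q(1) by (simp add: norm_power power_less_one_iff)
  have qpoch_nz: "qpoch (q^2) (q^2) k \<noteq> 0" "qpoch (q^(3+2*n)) (q^2) k \<noteq> 0"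
    using qpoch_neq_0[OF _ less_imp_le[OF nq2]] q(1) by (simp_all add: norm_power power_less_one_iff)
  have "a \<noteq> 0" "q \<noteq> 1" using q(2) nz(1) by (simp_all add: a_def)
  have powers: "q^(4*Suc k+1) = q^5*x^2" "q^(4*k+1) = q*x^2"
    "q^((1+2*n)*Suc k) = q^((1+2*n)*k)*q*a"
    "1 - inverse (q^(2*n)) * (q^2)^k = 1 - x/a" "1 - q^(3+2*n)*(q^2)^k = 1 - q^3*a*x"
    "1 - q*(q^2)^k = 1 - q*x" "1 - q^2*(q^2)^k = 1 - q^2*x"
    unfolding a_def x_def
    by (simp_all add: power_add power_mult[symmetric] algebra_simps divide_inverse)
  show ?thesis
    unfolding summand_def summand_ratio_def qpoch_Suc qint_eq_quotient[OF \<open>q \<noteq> 1\<close>] powers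
    unfolding a_def[symmetric] x_def[symmetric]
    using nz qpoch_nz \<open>a \<noteq> 0\<close> q(2) by (simp add: divide_simps)
qed

lemma summand_0 [simp]: "summand q n 0 = 1"
  by (simp add: summand_def qpoch_def qint_def)

lemma summand_eq_0:
  assumes "q \<noteq> 0" "n < k"
  shows "summand q n k = 0"
proof -
  have "qpoch (inverse (q^(2*n))) (q^2) k = 0"
    unfolding qpoch_def using assms
    by (auto simp: power_mult[symmetric] intro!: bexI[of _ n])
  thus ?thesis by (simp add: summand_def)
qed

lemma shifted_factors:
  fixes q a x :: complex
  shows "1 - q*(q^2*x)^2 = 1 - q^5*x^2" "1 - q^3*a*(q^2*x) = 1 - q^5*a*x"
    "1 - q^3*(q^2*a)*x = 1 - q^5*a*x"
  by (simp_all add: power2_eq_square algebra_simps eval_nat_numeral)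

lemma summand_ratio_shift:
  fixes q a x :: complex
  assumes q: "norm q < 1" and a: "norm a \<le> 1" and x: "norm x \<le> 1"
  shows "summand_ratio q a x * (x - q^2*a) * (1 - q^3*a*x)
       = summand_ratio q (q^2*a) x * (x - a) * (1 - q^5*a*x)"
proof -
  define F where "F = (1 - q^5*x^2) / (1 - q*x^2) * (1 - q*x)^3 / (1 - q^2*x)^3 * q"
  have ratio: "summand_ratio q b x * (1 - q^3*b*x) = F * (b - x)" if "1 - q^3*b*x \<noteq> 0" for b
    using that by (simp add: summand_ratio_def F_def)
  have shifted: "1 - q^3*(q^2*a)*x \<noteq> 0"
    using unit_disk_factors_neq_0(9)[OF q a x] unfolding shifted_factors .
  have "summand_ratio q a x * (x - q^2*a) * (1 - q^3*a*x)
      = (summand_ratio q a x * (1 - q^3*a*x)) * (x - q^2*a)"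
    by (simp only: ac_simps)
  also have "\<dots> = F * (q^2*a - x) * (x - a)"
    unfolding ratio[OF unit_disk_factors_neq_0(8)[OF q a x]] by algebra
  also have "\<dots> = (summand_ratio q (q^2*a) x * (1 - q^3*(q^2*a)*x)) * (x - a)"
    unfolding ratio[OF shifted] ..
  also have "\<dots> = summand_ratio q (q^2*a) x * (x - a) * (1 - q^5*a*x)"
    unfolding shifted_factors by (simp only: ac_simps)
  finally show ?thesis .
qed

lemma summand_Suc_upper:
  assumes q: "norm q < 1" "q \<noteq> 0"
  shows "summand q n k * (q^2)^k * (1 - q^2*(q^2)^n) * (1 - q^3*(q^2)^n)
       = summand q (Suc n) k * ((q^2)^k - q^2*(q^2)^n) * (1 - q^3*(q^2)^n*(q^2)^k)"
proof (induction k)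
  case 0
  show ?case by simp
next
  case (Suc k)
  define a x where "a = (q^2)^n" and "x = (q^2)^k"
  have na: "norm a \<le> 1" and nx: "norm x \<le> 1"
    unfolding a_def x_def using norm_qsq_power_le_1[OF q(1)] by auto
  have IH: "summand q n k * x * (1 - q^2*a) * (1 - q^3*a)
      = summand q (Suc n) k * (x - q^2*a) * (1 - q^3*a*x)"
    using Suc.IH unfolding a_def x_def .
  have Suc_n: "summand q (Suc n) (Suc k) = summand q (Suc n) k * summand_ratio q (q^2*a) x"
    using summand_Suc[OF q, of "Suc n" k] by (simp add: a_def x_def)
  have "summand q n (Suc k) * (q^2*x) * (1 - q^2*a) * (1 - q^3*a)
      = q^2 * summand_ratio q a x * (summand q n k * x * (1 - q^2*a) * (1 - q^3*a))"
    unfolding summand_Suc[OF q] a_def[symmetric] x_def[symmetric] by algebra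
  also have "\<dots> = q^2 * summand q (Suc n) k * (summand_ratio q a x * (x - q^2*a) * (1 - q^3*a*x))"
    unfolding IH by (simp only: mult_ac)
  also have "\<dots> = q^2 * summand q (Suc n) k * (summand_ratio q (q^2*a) x * (x - a) * (1 - q^5*a*x))"
    unfolding summand_ratio_shift[OF q(1) na nx] ..
  also have "\<dots> = summand q (Suc n) (Suc k) * (q^2*x - q^2*a) * (1 - q^3*a*(q^2*x))"
    unfolding Suc_n shifted_factors by algebra
  finally show ?case by (simp add: a_def x_def)
qed

text \<open>The term q^m / [m]^2, written as a function of y = q^m.\<close>

definition qharm_term :: "complex \<Rightarrow> complex \<Rightarrow> complex" where
  "qharm_term q y = y / ((1 - y) / (1 - q))^2"

definition zeil_cert :: "complex \<Rightarrow> complex \<Rightarrow> complex \<Rightarrow> complex" where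
  "zeil_cert q a x = - (q^2*a/x) * (1 - x)^3 * (1 - q^3*a*x) / ((1 - q*x^2) * (1 - q^2*a)^3)"

definition harm_cert :: "complex \<Rightarrow> complex \<Rightarrow> complex \<Rightarrow> complex" where
  "harm_cert q a x = - qharm_term q (q^2*a) * (1 - q^3*a*x) * (1 - x) / ((1 - q*x^2) * (1 - q^2*a))"

lemma zeil_cert_mult_summand_ratio:
  fixes q a x :: complex
  assumes q: "norm q < 1" "q \<noteq> 0" and a: "norm a \<le> 1" and x: "norm x \<le> 1" "x \<noteq> 0"
  shows "zeil_cert q a (q^2*x) * summand_ratio q (q^2*a) x
       = - (q^2*a) * (1 - q*x)^3 * (q^2*a - x) / (q*x * (1 - q*x^2) * (1 - q^2*a)^3)"
  using unit_disk_factors_neq_0(3,4,5,6,9)[OF q(1) a x(1)] q(2) x(2)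
  unfolding zeil_cert_def summand_ratio_def shifted_factors
  by (simp add: divide_simps) algebra

lemma zeil_cert_equation:
  fixes q a x :: complex
  assumes q: "norm q < 1" "q \<noteq> 0" and a: "norm a \<le> 1" and x: "norm x \<le> 1" "x \<noteq> 0"
  shows "1 - (1 - q*a) * (1 - q^3*a) / (1 - q^2*a)^2
             * ((x - q^2*a) * (1 - q^3*a*x) / (x * (1 - q^2*a) * (1 - q^3*a)))
       = zeil_cert q a (q^2*x) * summand_ratio q (q^2*a) x - zeil_cert q a x"
proof -
  have "1 - (1 - q*a) * (1 - q^3*a) / (1 - q^2*a)^2
             * ((x - q^2*a) * (1 - q^3*a*x) / (x * (1 - q^2*a) * (1 - q^3*a)))
       = - (q^2*a) * (1 - q*x)^3 * (q^2*a - x) / (q*x * (1 - q*x^2) * (1 - q^2*a)^3)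
         - zeil_cert q a x"
    using unit_disk_factors_neq_0(4,6,7,8)[OF q(1) a x(1)] q(2) x(2)
    unfolding zeil_cert_def
    by (simp add: divide_simps) algebra
  then show ?thesis
    unfolding zeil_cert_mult_summand_ratio[OF q a x] .
qed

lemma harm_cert_equation:
  fixes q a x :: complex
  assumes q: "norm q < 1" "q \<noteq> 0" and a: "norm a \<le> 1" and x: "norm x \<le> 1" "x \<noteq> 0"
  shows "qharm_term q (q^2*a) + zeil_cert q a (q^2*x) * summand_ratio q (q^2*a) x
           * (qharm_term q (q^2*x) - qharm_term q (q*x))
       = harm_cert q a (q^2*x) * summand_ratio q (q^2*a) x - harm_cert q a x"
proof -
  have "harm_cert q a (q^2*x) * summand_ratio q (q^2*a) x
      = - qharm_term q (q^2*a) * q * (1 - q*x)^3 * (q^2*a - x)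
          / ((1 - q*x^2) * (1 - q^2*a) * (1 - q^2*x)^2)"
    using unit_disk_factors_neq_0(1,3,4,5,6,9)[OF q(1) a x(1)] q(2) x(2)
    unfolding harm_cert_def summand_ratio_def shifted_factors
    by (simp add: divide_simps) algebra
  moreover have "qharm_term q (q^2*a)
         + - (q^2*a) * (1 - q*x)^3 * (q^2*a - x) / (q*x * (1 - q*x^2) * (1 - q^2*a)^3)
           * (qharm_term q (q^2*x) - qharm_term q (q*x))
       = - qharm_term q (q^2*a) * q * (1 - q*x)^3 * (q^2*a - x)
           / ((1 - q*x^2) * (1 - q^2*a) * (1 - q^2*x)^2)
         - harm_cert q a x"
    using unit_disk_factors_neq_0(1,2,3,4,6)[OF q(1) a x(1)] q(2) x(2)
    unfolding harm_cert_def qharm_term_def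
    by (simp add: divide_simps) algebra
  ultimately show ?thesis
    unfolding zeil_cert_mult_summand_ratio[OF q a x] by simp
qed

definition alt_qharmonic :: "complex \<Rightarrow> nat \<Rightarrow> complex" where
  "alt_qharmonic q k = (\<Sum>i=1..2*k. (-1)^i * q^i / (qint q i)^2)"

definition even_qharmonic :: "complex \<Rightarrow> nat \<Rightarrow> complex" where
  "even_qharmonic q n = (\<Sum>j=1..n. q^(2*j) / (qint q (2*j))^2)"

definition closed_form :: "complex \<Rightarrow> nat \<Rightarrow> complex" where
  "closed_form q n = qpoch q (q^2) n * qpoch (q^3) (q^2) n / (qpoch (q^2) (q^2) n)^2"

lemma qharm_term_power: "q \<noteq> 1 \<Longrightarrow> q^m / (qint q m)^2 = qharm_term q (q^m)"
  by (simp add: qharm_term_def qint_eq_quotient)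

lemma alt_qharmonic_Suc:
  assumes "q \<noteq> 1"
  shows "alt_qharmonic q (Suc k)
       = alt_qharmonic q k + (qharm_term q (q^2*(q^2)^k) - qharm_term q (q*(q^2)^k))"
proof -
  have odd_even: "q^(Suc (2*k)) = q*(q^2)^k" "q^(Suc (Suc (2*k))) = q^2*(q^2)^k"
    by (simp_all add: power_mult power2_eq_square)
  have "{1..2*Suc k} = insert (Suc (Suc (2*k))) (insert (Suc (2*k)) {1..2*k})" by auto
  then have "alt_qharmonic q (Suc k) = alt_qharmonic q k
      - q^(Suc (2*k)) / (qint q (Suc (2*k)))^2 + q^(Suc (Suc (2*k))) / (qint q (Suc (Suc (2*k))))^2"
    by (simp add: alt_qharmonic_def)
  also have "\<dots> = alt_qharmonic q k + (qharm_term q (q^2*(q^2)^k) - qharm_term q (q*(q^2)^k))"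
    unfolding qharm_term_power[OF assms] unfolding odd_even by simp
  finally show ?thesis .
qed

lemma even_qharmonic_Suc:
  assumes "q \<noteq> 1"
  shows "even_qharmonic q (Suc n) = even_qharmonic q n + qharm_term q (q^2*(q^2)^n)"
proof -
  have "even_qharmonic q (Suc n) = even_qharmonic q n + q^(2*Suc n) / (qint q (2*Suc n))^2"
    unfolding even_qharmonic_def by (subst sum.nat_ivl_Suc') (simp_all add: add.commute)
  also have "\<dots> = even_qharmonic q n + qharm_term q (q^(2*Suc n))"
    by (simp only: qharm_term_power[OF assms])
  also have "q^(2*Suc n) = q^2*(q^2)^n"
    by (simp add: power_mult power2_eq_square)
  finally show ?thesis .
qed

lemma closed_form_Suc:
  assumes "norm q < 1"
  shows "closed_form q (Suc n)
       = closed_form q n * ((1 - q*(q^2)^n) * (1 - q^3*(q^2)^n) / (1 - q^2*(q^2)^n)^2)"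
proof -
  have nq2: "norm (q^2) < 1" using assms by (simp add: norm_power power_less_one_iff)
  have "qpoch (q^2) (q^2) n \<noteq> 0" using qpoch_neq_0[OF nq2 less_imp_le[OF nq2]] .
  moreover have "1 - q^2*(q^2)^n \<noteq> 0"
    using one_minus_mult_neq_0[OF nq2 norm_qsq_power_le_1[OF assms]] .
  ultimately show ?thesis
    unfolding closed_form_def qpoch_Suc by (simp add: power_mult_distrib mult_ac)
qed

lemma summand_zeil_cert:
  assumes q: "norm q < 1" "q \<noteq> 0" and a: "a = (q^2)^n"
  shows "summand q (Suc n) k - (1 - q*a) * (1 - q^3*a) / (1 - q^2*a)^2 * summand q n k
       = zeil_cert q a ((q^2)^Suc k) * summand q (Suc n) (Suc k)
         - zeil_cert q a ((q^2)^k) * summand q (Suc n) k"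
proof -
  define x w where "x = (q^2)^k" and "w = summand q (Suc n) k"
  have na: "norm a \<le> 1" and nx: "norm x \<le> 1" and x0: "x \<noteq> 0"
    using norm_qsq_power_le_1[OF q(1)] q(2) by (auto simp: a x_def)
  note nz = unit_disk_factors_neq_0(6,7)[OF q(1) na nx]
  have "summand q n k * (x * (1 - q^2*a) * (1 - q^3*a)) = w * ((x - q^2*a) * (1 - q^3*a*x))"
    using summand_Suc_upper[OF q, of n k] by (simp add: a x_def w_def mult_ac)
  then have t: "summand q n k = w * ((x - q^2*a) * (1 - q^3*a*x) / (x * (1 - q^2*a) * (1 - q^3*a)))"
    using x0 nz by (simp add: eq_divide_eq)
  have w_Suc: "summand q (Suc n) (Suc k) = w * summand_ratio q (q^2*a) x"
    using summand_Suc[OF q, of "Suc n" k] by (simp add: a x_def w_def)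
  have "summand q (Suc n) k - (1 - q*a) * (1 - q^3*a) / (1 - q^2*a)^2 * summand q n k
      = w * (1 - (1 - q*a) * (1 - q^3*a) / (1 - q^2*a)^2
               * ((x - q^2*a) * (1 - q^3*a*x) / (x * (1 - q^2*a) * (1 - q^3*a))))"
    unfolding t w_def[symmetric] by (simp add: right_diff_distrib mult.left_commute)
  also have "\<dots> = w * (zeil_cert q a (q^2*x) * summand_ratio q (q^2*a) x - zeil_cert q a x)"
    unfolding zeil_cert_equation[OF q na nx x0] ..
  also have "\<dots> = zeil_cert q a ((q^2)^Suc k) * summand q (Suc n) (Suc k)
         - zeil_cert q a ((q^2)^k) * summand q (Suc n) k"
    unfolding w_Suc by (simp add: x_def w_def right_diff_distrib mult_ac)
  finally show ?thesis .
qed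

lemma summand_harm_cert:
  assumes q: "norm q < 1" "q \<noteq> 0" and a: "a = (q^2)^n"
  shows "qharm_term q (q^2*a) * summand q (Suc n) k
         + zeil_cert q a ((q^2)^Suc k) * summand q (Suc n) (Suc k)
           * (qharm_term q (q^2*(q^2)^k) - qharm_term q (q*(q^2)^k))
       = harm_cert q a ((q^2)^Suc k) * summand q (Suc n) (Suc k)
         - harm_cert q a ((q^2)^k) * summand q (Suc n) k"
proof -
  define x w where "x = (q^2)^k" and "w = summand q (Suc n) k"
  have na: "norm a \<le> 1" and nx: "norm x \<le> 1" and x0: "x \<noteq> 0"
    using norm_qsq_power_le_1[OF q(1)] q(2) by (auto simp: a x_def)
  have w_Suc: "summand q (Suc n) (Suc k) = w * summand_ratio q (q^2*a) x"
    using summand_Suc[OF q, of "Suc n" k] by (simp add: a x_def w_def)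
  have "qharm_term q (q^2*a) * summand q (Suc n) k
         + zeil_cert q a ((q^2)^Suc k) * summand q (Suc n) (Suc k)
           * (qharm_term q (q^2*(q^2)^k) - qharm_term q (q*(q^2)^k))
      = w * (qharm_term q (q^2*a) + zeil_cert q a (q^2*x) * summand_ratio q (q^2*a) x
               * (qharm_term q (q^2*x) - qharm_term q (q*x)))"
    unfolding w_Suc by (simp add: x_def w_def algebra_simps)
  also have "\<dots> = w * (harm_cert q a (q^2*x) * summand_ratio q (q^2*a) x - harm_cert q a x)"
    unfolding harm_cert_equation[OF q na nx x0] ..
  also have "\<dots> = harm_cert q a ((q^2)^Suc k) * summand q (Suc n) (Suc k)
         - harm_cert q a ((q^2)^k) * summand q (Suc n) k"
    unfolding w_Suc by (simp add: x_def w_def right_diff_distrib mult_ac)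
  finally show ?thesis .
qed

lemma summand_sums_Suc:
  assumes q: "norm q < 1" "q \<noteq> 0" and a: "a = (q^2)^n" and m: "Suc n < m"
  shows "(\<Sum>k<m. summand q (Suc n) k)
       = (1 - q*a) * (1 - q^3*a) / (1 - q^2*a)^2 * (\<Sum>k<m. summand q n k)" (is ?plain)
    and "(\<Sum>k<m. summand q (Suc n) k * alt_qharmonic q k)
       = (1 - q*a) * (1 - q^3*a) / (1 - q^2*a)^2 * (\<Sum>k<m. summand q n k * alt_qharmonic q k)
         + qharm_term q (q^2*a) * (\<Sum>k<m. summand q (Suc n) k)" (is ?weighted)
proof -
  have "q \<noteq> 1" using q(1) by auto
  note telescoping = creative_telescoping[where
      D = "\<lambda>k. zeil_cert q a ((q^2)^k) * summand q (Suc n) k" and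
      Z = "\<lambda>k. harm_cert q a ((q^2)^k) * summand q (Suc n) k" and
      h = "\<lambda>k. qharm_term q (q^2*(q^2)^k) - qharm_term q (q*(q^2)^k)" and
      H = "alt_qharmonic q" and m = m,
    OF _ _ _ _ summand_zeil_cert[OF q a] summand_harm_cert[OF q a]
      alt_qharmonic_Suc[OF \<open>q \<noteq> 1\<close>]]
  show ?plain ?weighted
    by (rule telescoping; simp add: summand_eq_0[OF q(2) m] zeil_cert_def harm_cert_def)+
qed

lemma sum_summand_0:
  assumes "q \<noteq> 0" "0 < m"
  shows "(\<Sum>k<m. summand q 0 k * f k) = f 0"
proof -
  obtain m' where "m = Suc m'" using assms(2) gr0_conv_Suc by blast
  then show ?thesis
    using summand_eq_0[OF assms(1)] by (simp add: sum.lessThan_Suc_shift del: sum.lessThan_Suc)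
qed

lemma sum_summand:
  assumes q: "norm q < 1" "q \<noteq> 0" and "n < m"
  shows "(\<Sum>k<m. summand q n k) = closed_form q n"
  using \<open>n < m\<close>
proof (induction n)
  case 0
  then show ?case using sum_summand_0[OF q(2), of m "\<lambda>_. 1"] by (simp add: closed_form_def qpoch_def)
next
  case (Suc n)
  then show ?case
    using summand_sums_Suc(1)[OF q refl Suc.prems] closed_form_Suc[OF q(1)] by (simp add: mult.commute)
qed

lemma sum_summand_alt_qharmonic:
  assumes q: "norm q < 1" "q \<noteq> 0" and "n < m"
  shows "(\<Sum>k<m. summand q n k * alt_qharmonic q k) = closed_form q n * even_qharmonic q n"
  using \<open>n < m\<close>
proof (induction n)
  case 0
  then show ?case
    using sum_summand_0[OF q(2), of m "alt_qharmonic q"] by (simp add: alt_qharmonic_def even_qharmonic_def)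
next
  case (Suc n)
  define r g where "r = (1 - q*(q^2)^n) * (1 - q^3*(q^2)^n) / (1 - q^2*(q^2)^n)^2"
    and "g = qharm_term q (q^2*(q^2)^n)"
  have "q \<noteq> 1" using q(1) by auto
  have "(\<Sum>k<m. summand q (Suc n) k * alt_qharmonic q k)
      = r * (closed_form q n * even_qharmonic q n) + g * closed_form q (Suc n)"
    using summand_sums_Suc(2)[OF q refl Suc.prems] Suc.IH Suc.prems sum_summand[OF q Suc.prems]
    by (simp add: r_def g_def)
  also have "\<dots> = closed_form q (Suc n) * even_qharmonic q (Suc n)"
    unfolding closed_form_Suc[OF q(1)] even_qharmonic_Suc[OF \<open>q \<noteq> 1\<close>] r_def[symmetric] g_def[symmetric]
    by (simp only: distrib_left mult_ac)
  finally show ?case .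
qed

theorem mainTheorem10:
  fixes n :: nat and q :: complex
  assumes "n \<ge> 1" and "0 < norm q" and "norm q < 1"
  shows "(\<Sum>k=1..n. qint q (4*k+1)
            * (qpoch q (q^2) k)^3 / (qpoch (q^2) (q^2) k)^3
            * qpoch (inverse (q^(2*n))) (q^2) k / qpoch (q^(3+2*n)) (q^2) k
            * q^((1+2*n)*k)
            * (\<Sum>i=1..2*k. (-1)^i * q^i / (qint q i)^2))
       = qpoch q (q^2) n * qpoch (q^3) (q^2) n / (qpoch (q^2) (q^2) n)^2
            * (\<Sum>j=1..n. q^(2*j) / (qint q (2*j))^2)"
proof -
  have q: "norm q < 1" "q \<noteq> 0" using assms(2,3) by auto
  have "{..<Suc n} = insert 0 {1..n}" by auto
  then have "(\<Sum>k=1..n. summand q n k * alt_qharmonic q k)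
      = (\<Sum>k<Suc n. summand q n k * alt_qharmonic q k)"
    by (simp add: alt_qharmonic_def)
  also have "\<dots> = closed_form q n * even_qharmonic q n"
    by (rule sum_summand_alt_qharmonic[OF q lessI])
  finally show ?thesis
    unfolding summand_def alt_qharmonic_def closed_form_def even_qharmonic_def .
qed

end
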